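(* Let $G=(V,E)$ be a connected, locally finite, undirected graph, let $s:V\to\mathbb{R}$, and let $\ell$ be a legal toppling procedure for $s$. Then: (i) for every $f\in\mathcal{F}_s$ we have $\ell_\infty\le f$ pointwise; (ii) if $u$ is any stabilizing toppling procedure for $s$, then $\ell_\infty\le u_\infty$; (iii) if $u$ is any legal stabilizing toppling procedure for $s$, then for all $x\in V$, $u_\infty(x)=\inf\{f(x): f\in\mathcal{F}_s\}$. In particular $u_\infty$ and the final configuration $s+\Delta u_\infty$ do not depend on the choice of legal stabilizing toppling procedure $u$.
   Context: $\Delta u(x)=\sum_{y\sim x}(u(y)-u(x))$ and $\mathcal{F}_s=\{f:V\to\mathbb{R}: f\ge 0,\ s+\Delta f\le 1\}$. A toppling procedure is given by a well-ordered closed set $T\subset[0,\infty)$ with $0\in T$ and a function $(t,x)\mapsto u_t(x)\in[0,\infty)$ on $T\times V$ such that for all $x$: $u_0(x)=0$; $u_{t_1}(x)\le u_{t_2}(x)$ for $t_1\le t_2$; and $t_n\uparrow t$ implies $u_{t_n}(x)\uparrow u_t(x)$. Set $s_t=s+\Delta u_t$ and $t^-=\sup\{r\in T: r<t\}$. The procedure is legal for $s$ if $u_t(x)-u_{t^-}(x)\le (s_{t^-}(x)-1)^+/\deg(x)$ for all $x\in V$ and $t\in T\setminus\{0\}$. It is finite if $u_\infty(x):=\lim_{t\to\sup T}u_t(x)<\infty$ for all $x$, and stabilizing for $s$ if it is finite and $s+\Delta u_\infty\le 1$. *)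

theory Defs
  imports "HOL-Analysis.Analysis"
begin

text \<open>Graph: vertex set = UNIV of type 'a, adjacency E (symmetric, no loops).\<close>

definition nbrs :: "('a \<Rightarrow> 'a \<Rightarrow> bool) \<Rightarrow> 'a \<Rightarrow> 'a set" where
  "nbrs E x = {y. E x y}"

definition deg :: "('a \<Rightarrow> 'a \<Rightarrow> bool) \<Rightarrow> 'a \<Rightarrow> nat" where
  "deg E x = card (nbrs E x)"

definition lap :: "('a \<Rightarrow> 'a \<Rightarrow> bool) \<Rightarrow> ('a \<Rightarrow> real) \<Rightarrow> 'a \<Rightarrow> real" where
  "lap E u x = (\<Sum>y\<in>nbrs E x. u y - u x)"

definition conn_lf_graph :: "('a \<Rightarrow> 'a \<Rightarrow> bool) \<Rightarrow> bool" where
  "conn_lf_graph E \<longleftrightarrow>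
     (\<forall>x y. E x y \<longrightarrow> E y x) \<and> (\<forall>x. \<not> E x x) \<and>
     (\<forall>x. finite (nbrs E x)) \<and> (\<forall>x y. E\<^sup>*\<^sup>* x y)"

definition Fs :: "('a \<Rightarrow> 'a \<Rightarrow> bool) \<Rightarrow> ('a \<Rightarrow> real) \<Rightarrow> ('a \<Rightarrow> real) set" where
  "Fs E s = {f. (\<forall>x. 0 \<le> f x) \<and> (\<forall>x. s x + lap E f x \<le> 1)}"

definition well_ordered_set :: "real set \<Rightarrow> bool" where
  "well_ordered_set T \<longleftrightarrow> (\<forall>S. S \<subseteq> T \<and> S \<noteq> {} \<longrightarrow> (\<exists>m\<in>S. \<forall>y\<in>S. m \<le> y))"

definition toppling_procedure :: "real set \<Rightarrow> (real \<Rightarrow> 'a \<Rightarrow> real) \<Rightarrow> bool" where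
  "toppling_procedure T u \<longleftrightarrow>
     T \<subseteq> {0..} \<and> closed T \<and> well_ordered_set T \<and> 0 \<in> T \<and>
     (\<forall>t\<in>T. \<forall>x. 0 \<le> u t x) \<and>
     (\<forall>x. u 0 x = 0) \<and>
     (\<forall>x. \<forall>t1\<in>T. \<forall>t2\<in>T. t1 \<le> t2 \<longrightarrow> u t1 x \<le> u t2 x) \<and>
     (\<forall>x tn t. (\<forall>n. tn n \<in> T) \<and> incseq tn \<and> t \<in> T \<and> tn \<longlonglongrightarrow> t
          \<longrightarrow> (\<lambda>n. u (tn n) x) \<longlonglongrightarrow> u t x)"

definition tminus :: "real set \<Rightarrow> real \<Rightarrow> real" where
  "tminus T t = Sup {r\<in>T. r < t}"

definition legal :: "('a \<Rightarrow> 'a \<Rightarrow> bool) \<Rightarrow> ('a \<Rightarrow> real) \<Rightarrow> real set \<Rightarrow> (real \<Rightarrow> 'a \<Rightarrow> real) \<Rightarrow> bool" where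
  "legal E s T u \<longleftrightarrow> toppling_procedure T u \<and>
     (\<forall>x. \<forall>t\<in>T - {0}.
        u t x - u (tminus T t) x \<le> max (s x + lap E (u (tminus T t)) x - 1) 0 / real (deg E x))"

text \<open>u_infinity = lim_{t -> sup T} u_t, which for a monotone family equals the supremum over T
  (extended-real valued, so it may be infinite).\<close>
definition u_inf :: "real set \<Rightarrow> (real \<Rightarrow> 'a \<Rightarrow> real) \<Rightarrow> 'a \<Rightarrow> ereal" where
  "u_inf T u x = (SUP t\<in>T. ereal (u t x))"

definition finite_tp :: "real set \<Rightarrow> (real \<Rightarrow> 'a \<Rightarrow> real) \<Rightarrow> bool" where
  "finite_tp T u \<longleftrightarrow> (\<forall>x. u_inf T u x < \<infinity>)"

definition stabilizing :: "('a \<Rightarrow> 'a \<Rightarrow> bool) \<Rightarrow> ('a \<Rightarrow> real) \<Rightarrow> real set \<Rightarrow> (real \<Rightarrow> 'a \<Rightarrow> real) \<Rightarrow> bool" where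
  "stabilizing E s T u \<longleftrightarrow> toppling_procedure T u \<and> finite_tp T u \<and>
     (\<forall>x. s x + lap E (\<lambda>y. real_of_ereal (u_inf T u y)) x \<le> 1)"

end

theory Submission
  imports Defs
begin

text \<open>Every legal toppling procedure stays below every \<open>f \<in> Fs E s\<close>, by transfinite induction
  along its well-ordered time set: at a successor time the legal increment at \<open>x\<close> is at most
  what is needed to make \<open>x\<close> stable against neighbours that are themselves below \<open>f\<close>, and
  \<open>f\<close> is stable at \<open>x\<close>; limit times follow by continuity. A stabilizing procedure has its
  limit in \<open>Fs E s\<close>, so a legal stabilizing one attains the pointwise infimum of \<open>Fs E s\<close>.\<close>

lemma well_ordered_set_induct [consumes 2, case_names less]:
  assumes "well_ordered_set T" "t \<in> T"
    and step: "\<And>t. t \<in> T \<Longrightarrow> (\<And>r. r \<in> T \<Longrightarrow> r < t \<Longrightarrow> P r) \<Longrightarrow> P t"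
  shows "P t"
proof (rule ccontr)
  assume "\<not> P t"
  then obtain m where m: "m \<in> T" "\<not> P m" and least: "\<And>y. y \<in> T \<Longrightarrow> \<not> P y \<Longrightarrow> m \<le> y"
    using assms(1,2) unfolding well_ordered_set_def
    by (drule_tac x = "{t \<in> T. \<not> P t}" in spec) force
  have "P m"
    by (rule step[OF m(1)]) (use least in force)
  with m(2) show False ..
qed

lemma Fs_toppling_step_le:
  assumes f: "f \<in> Fs E s" and below: "\<And>y. w y \<le> f y"
    and step: "v x - w x \<le> max (s x + lap E w x - 1) 0 / real (deg E x)"
  shows "v x \<le> f x"
proof (cases "deg E x = 0 \<or> s x + lap E w x - 1 \<le> 0")
  case True
  then show ?thesis using step below[of x] by auto
next
  case False
  let ?N = "nbrs E x" and ?d = "real (deg E x)"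
  have d: "?d > 0" using False by simp
  have lap_eq: "lap E g x = (\<Sum>y\<in>?N. g y) - ?d * g x" for g
    unfolding lap_def deg_def by (simp add: sum_subtractf)
  have "v x \<le> w x + (s x + lap E w x - 1) / ?d" using step False by simp
  also have "\<dots> = (s x + (\<Sum>y\<in>?N. w y) - 1) / ?d"
    using d by (simp add: lap_eq field_simps)
  also have "\<dots> \<le> (s x + (\<Sum>y\<in>?N. f y) - 1) / ?d"
    using d sum_mono[of ?N w f] below by (simp add: divide_right_mono)
  also have "\<dots> \<le> f x"
  proof -
    have "s x + lap E f x \<le> 1" using f unfolding Fs_def by blast
    then show ?thesis using d lap_eq[of f] by (simp add: pos_divide_le_eq algebra_simps)
  qed
  finally show ?thesis .
qed

lemma tminus_mem_le:
  assumes "closed T" "r \<in> T" "r < t"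
  shows "tminus T t \<in> T" "tminus T t \<le> t"
proof -
  have ne: "{r \<in> T. r < t} \<noteq> {}" and bdd: "bdd_above {r \<in> T. r < t}"
    using assms(2,3) by (auto intro!: bdd_aboveI[of _ t])
  show "tminus T t \<in> T"
    unfolding tminus_def by (rule closed_subset_contains_Sup[OF assms(1) _ ne bdd]) blast
  show "tminus T t \<le> t"
    unfolding tminus_def by (rule cSup_least[OF ne]) auto
qed

lemma tminus_eq_imp_incseq_tendsto:
  assumes "r\<^sub>0 \<in> T" "r\<^sub>0 < t" "tminus T t = t"
  obtains r where "\<And>n. r n \<in> T" "\<And>n. r n < t" "incseq r" "r \<longlonglongrightarrow> t"
proof -
  let ?S = "{r \<in> T. r < t}"
  have ne: "?S \<noteq> {}" and bdd: "bdd_above ?S"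
    using assms(1,2) by (auto intro!: bdd_aboveI[of _ t])
  have "t - inverse (real (Suc n)) < Sup ?S" for n
    using assms(3) unfolding tminus_def by simp
  then have "\<exists>c \<in> ?S. t - inverse (real (Suc n)) < c" for n
    using less_cSup_iff[OF ne bdd] by blast
  then obtain c where c: "\<And>n. c n \<in> ?S" "\<And>n. t - inverse (real (Suc n)) < c n"
    by metis
  \<comment> \<open>running maxima of the approximants \<open>c\<close> make the sequence increasing\<close>
  define r where "r n = Max (c ` {..n})" for n
  have r_mem: "r n \<in> ?S" for n
  proof -
    have "r n \<in> c ` {..n}"
      unfolding r_def by (intro Max_in) auto
    then show ?thesis by (rule imageE) (use c(1) in simp)
  qed
  have c_le: "c n \<le> r n" for n
    unfolding r_def by (rule Max_ge) auto
  have lower: "t - inverse (real (Suc n)) \<le> r n" for n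
    using c(2)[of n] c_le[of n] by linarith
  have ev_lower: "\<forall>\<^sub>F n in sequentially. t - inverse (real (Suc n)) \<le> r n"
    using lower by (intro always_eventually allI)
  have ev_upper: "\<forall>\<^sub>F n in sequentially. r n \<le> t"
    using r_mem by (intro always_eventually allI) (simp add: less_imp_le)
  have "(\<lambda>n. t - inverse (real (Suc n))) \<longlonglongrightarrow> t"
    using tendsto_diff[OF tendsto_const LIMSEQ_inverse_real_of_nat, of t] by simp
  then have "r \<longlonglongrightarrow> t"
    by (rule tendsto_sandwich[OF ev_lower ev_upper _ tendsto_const])
  moreover have "incseq r"
    unfolding incseq_def r_def by (intro allI impI Max_mono) auto
  ultimately show ?thesis
    using that r_mem by blast
qed

lemma legal_le_Fs:
  assumes legal: "legal E s T u" and f: "f \<in> Fs E s" and "t \<in> T"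
  shows "u t x \<le> f x"
proof -
  have tp: "toppling_procedure T u" using legal unfolding legal_def by blast
  then have T: "T \<subseteq> {0..}" "closed T" "well_ordered_set T" "0 \<in> T"
    unfolding toppling_procedure_def by auto
  have "\<forall>x. u t x \<le> f x"
    using T(3) \<open>t \<in> T\<close>
  proof (induction t rule: well_ordered_set_induct)
    case (less t)
    show ?case
    proof (cases "t = 0")
      case True
      then show ?thesis using tp f by (simp add: toppling_procedure_def Fs_def)
    next
      case False
      with less.hyps T(1) have "0 < t" by force
      note tminus = tminus_mem_le[OF T(2) T(4) this]
      show ?thesis
      proof (cases "tminus T t < t")
        case True
        have "\<forall>y. u (tminus T t) y \<le> f y" using less.IH[OF tminus(1) True] .
        with legal less.hyps \<open>t \<noteq> 0\<close> show ?thesis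
          unfolding legal_def by (blast intro: Fs_toppling_step_le[OF f])
      next
        case False
        then have "tminus T t = t" using tminus(2) by simp
        then obtain r where r: "\<And>n. r n \<in> T" "\<And>n. r n < t" "incseq r" "r \<longlonglongrightarrow> t"
          using tminus_eq_imp_incseq_tendsto[OF T(4) \<open>0 < t\<close>] by blast
        show ?thesis
        proof
          fix x
          have "(\<lambda>n. u (r n) x) \<longlonglongrightarrow> u t x"
            using tp r less.hyps unfolding toppling_procedure_def by blast
          then show "u t x \<le> f x"
            by (rule LIMSEQ_le_const2) (use less.IH r(1,2) in blast)
        qed
      qed
    qed
  qed
  then show ?thesis ..
qed

lemma legal_u_inf_le_Fs:
  assumes "legal E s T u" "f \<in> Fs E s"
  shows "u_inf T u x \<le> ereal (f x)"
  using legal_le_Fs[OF assms] unfolding u_inf_def by (auto intro!: SUP_least)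

lemma stabilizing_u_inf_real:
  assumes "stabilizing E s T u"
  shows "u_inf T u x = ereal (real_of_ereal (u_inf T u x))"
    and "0 \<le> real_of_ereal (u_inf T u x)"
proof -
  have tp: "toppling_procedure T u" and fin: "u_inf T u x < \<infinity>"
    using assms unfolding stabilizing_def finite_tp_def by auto
  then have "0 \<in> T" "u 0 x = 0"
    unfolding toppling_procedure_def by auto
  then have "0 \<le> u_inf T u x"
    unfolding u_inf_def by (intro SUP_upper2[of 0]) simp_all
  with fin obtain r where "u_inf T u x = ereal r" "0 \<le> r"
    by (cases "u_inf T u x") auto
  then show "u_inf T u x = ereal (real_of_ereal (u_inf T u x))"
    and "0 \<le> real_of_ereal (u_inf T u x)"
    by simp_all
qed

lemma stabilizing_u_inf_in_Fs:
  assumes "stabilizing E s T u"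
  shows "(\<lambda>y. real_of_ereal (u_inf T u y)) \<in> Fs E s"
  using assms stabilizing_u_inf_real(2)[OF assms] unfolding stabilizing_def Fs_def by blast

lemma legal_stabilizing_u_inf_le:
  assumes "legal E s T\<^sub>l l" "stabilizing E s T u"
  shows "u_inf T\<^sub>l l x \<le> u_inf T u x"
  using legal_u_inf_le_Fs[OF assms(1) stabilizing_u_inf_in_Fs[OF assms(2)], of x]
  by (simp flip: stabilizing_u_inf_real(1)[OF assms(2)])

lemma legal_stabilizing_u_inf_eq_Inf:
  assumes "legal E s T u" "stabilizing E s T u"
  shows "real_of_ereal (u_inf T u x) = Inf {f x | f. f \<in> Fs E s}"
proof (rule cInf_eq_minimum[symmetric])
  show "real_of_ereal (u_inf T u x) \<in> {f x | f. f \<in> Fs E s}"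
    using stabilizing_u_inf_in_Fs[OF assms(2)] by auto
next
  fix z assume "z \<in> {f x | f. f \<in> Fs E s}"
  then have "u_inf T u x \<le> ereal z" using legal_u_inf_le_Fs[OF assms(1)] by blast
  then show "real_of_ereal (u_inf T u x) \<le> z"
    by (subst (asm) stabilizing_u_inf_real(1)[OF assms(2)]) simp
qed

lemma legal_stabilizing_u_inf_unique:
  assumes "legal E s T u" "stabilizing E s T u" "legal E s T' u'" "stabilizing E s T' u'"
  shows "u_inf T u = u_inf T' u'"
proof
  fix x
  show "u_inf T u x = u_inf T' u' x"
    using legal_stabilizing_u_inf_eq_Inf[OF assms(1,2), of x]
      legal_stabilizing_u_inf_eq_Inf[OF assms(3,4), of x]
      stabilizing_u_inf_real(1)[OF assms(2), of x] stabilizing_u_inf_real(1)[OF assms(4), of x]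
    by simp
qed

theorem proposition2p5:
  fixes E :: "'a \<Rightarrow> 'a \<Rightarrow> bool" and s :: "'a \<Rightarrow> real"
    and Tl :: "real set" and l :: "real \<Rightarrow> 'a \<Rightarrow> real"
  assumes "conn_lf_graph E"
    and "legal E s Tl l"
  shows "(\<forall>f\<in>Fs E s. \<forall>x. u_inf Tl l x \<le> ereal (f x))
    \<and> (\<forall>T u. stabilizing E s T u \<longrightarrow> (\<forall>x. u_inf Tl l x \<le> u_inf T u x))
    \<and> (\<forall>T u. legal E s T u \<and> stabilizing E s T u \<longrightarrow>
          (\<forall>x. real_of_ereal (u_inf T u x) = Inf {f x | f. f \<in> Fs E s}))
    \<and> (\<forall>T u T' u'. legal E s T u \<and> stabilizing E s T u \<and> legal E s T' u' \<and> stabilizing E s T' u' \<longrightarrow>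
          u_inf T u = u_inf T' u' \<and>
          (\<forall>x. s x + lap E (\<lambda>y. real_of_ereal (u_inf T u y)) x
             = s x + lap E (\<lambda>y. real_of_ereal (u_inf T' u' y)) x))"
proof (intro conjI allI impI ballI)
  show "u_inf Tl l x \<le> ereal (f x)" if "f \<in> Fs E s" for f x
    using legal_u_inf_le_Fs[OF assms(2) that] .
  show "u_inf Tl l x \<le> u_inf T u x" if "stabilizing E s T u" for T u x
    using legal_stabilizing_u_inf_le[OF assms(2) that] .
  show "real_of_ereal (u_inf T u x) = Inf {f x | f. f \<in> Fs E s}"
    if "legal E s T u \<and> stabilizing E s T u" for T u x
    using that by (intro legal_stabilizing_u_inf_eq_Inf) simp_all
  fix T u T' u'
  assume "legal E s T u \<and> stabilizing E s T u \<and> legal E s T' u' \<and> stabilizing E s T' u'"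
  then have same: "u_inf T u = u_inf T' u'" using legal_stabilizing_u_inf_unique by blast
  then show "u_inf T u = u_inf T' u'" .
  show "s x + lap E (\<lambda>y. real_of_ereal (u_inf T u y)) x
      = s x + lap E (\<lambda>y. real_of_ereal (u_inf T' u' y)) x" for x
    by (simp add: same)
qed

end
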